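(* Let $A\in\mathbb{R}^{n\times n}$, $B\in\mathbb{R}^n$ with $(A,B)$ controllable, $n\ge2$, and let $\mathrm{an}_k\in\mathbb{R}^{(n-k)\times(n-k+1)}$, $k=1,\dots,n-1$, be full row rank matrices with $\mathrm{an}_kB_{k-1}=0$, where $B_0=B$ and $B_k=\mathrm{an}_k\cdots\mathrm{an}_1A^kB$. Put $A_{t,i}=\mathrm{an}_i\cdots\mathrm{an}_1A^i$ ($i=1,\dots,n-1$). Let $\Phi(s)=s^n+p_1s^{n-1}+\dots+p_{n-1}s+p_n$ be a real polynomial and define $$K_0=p_nI_n,\qquad K_i=\mathrm{an}_iK_{i-1}+p_{n-i}A_{t,i}\quad(i=1,\dots,n-1),\qquad K_n=K_{n-1}+A_{t,n-1}A .$$ Then $B_{n-1}=A_{t,n-1}B\neq0$ and the row vector $K=\frac{1}{B_{n-1}}K_n$ satisfies $\det(sI-A+BK)=\Phi(s)$. *)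

theory Defs
  imports "Jordan_Normal_Form.Char_Poly" "Jordan_Normal_Form.DL_Rank"
begin

definition mrank :: "real mat \<Rightarrow> nat" where
  "mrank M = vec_space.rank (dim_row M) M"

definition ctrb_mat :: "nat \<Rightarrow> real mat \<Rightarrow> real mat \<Rightarrow> real mat" where
  "ctrb_mat n A B = mat n n (\<lambda>(i,j). ((A ^\<^sub>m j) * B) $$ (i, 0))"

definition controllable :: "nat \<Rightarrow> real mat \<Rightarrow> real mat \<Rightarrow> bool" where
  "controllable n A B \<longleftrightarrow> mrank (ctrb_mat n A B) = n"

fun an_prod :: "nat \<Rightarrow> (nat \<Rightarrow> real mat) \<Rightarrow> nat \<Rightarrow> real mat" where
  "an_prod n an 0 = 1\<^sub>m n"
| "an_prod n an (Suc k) = an (Suc k) * an_prod n an k"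

definition Bk :: "nat \<Rightarrow> real mat \<Rightarrow> real mat \<Rightarrow> (nat \<Rightarrow> real mat) \<Rightarrow> nat \<Rightarrow> real mat" where
  "Bk n A B an k = an_prod n an k * (A ^\<^sub>m k) * B"

definition At :: "nat \<Rightarrow> real mat \<Rightarrow> (nat \<Rightarrow> real mat) \<Rightarrow> nat \<Rightarrow> real mat" where
  "At n A an i = an_prod n an i * (A ^\<^sub>m i)"

fun Kseq :: "nat \<Rightarrow> real mat \<Rightarrow> (nat \<Rightarrow> real mat) \<Rightarrow> (nat \<Rightarrow> real) \<Rightarrow> nat \<Rightarrow> real mat" where
  "Kseq n A an p 0 = p n \<cdot>\<^sub>m 1\<^sub>m n"
| "Kseq n A an p (Suc i) = an (Suc i) * Kseq n A an p i + p (n - Suc i) \<cdot>\<^sub>m At n A an (Suc i)"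

definition Kn :: "nat \<Rightarrow> real mat \<Rightarrow> (nat \<Rightarrow> real mat) \<Rightarrow> (nat \<Rightarrow> real) \<Rightarrow> real mat" where
  "Kn n A an p = Kseq n A an p (n - 1) + At n A an (n - 1) * A"

definition Phi :: "nat \<Rightarrow> (nat \<Rightarrow> real) \<Rightarrow> real poly" where
  "Phi n p = monom 1 n + (\<Sum>i = 1..n. monom (p i) (n - i))"

end

theory Submission
  imports Defs
begin

text \<open>
  Unrolling the recursion gives \<open>K\<^sub>n = t \<Phi>(A)\<close> with \<open>t = an\<^sub>n\<^sub>-\<^sub>1 \<cdots> an\<^sub>1\<close>.
  Since each \<open>an\<^sub>k\<close> kills \<open>B\<^sub>k\<^sub>-\<^sub>1\<close>, the row \<open>t\<close> annihilates \<open>B, AB, \<dots>, A\<^sup>n\<^sup>-\<^sup>2B\<close>; as the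
  \<open>an\<^sub>k\<close> have full row rank and \<open>(A, B)\<close> is controllable, \<open>b = t A\<^sup>n\<^sup>-\<^sup>1B \<noteq> 0\<close>.
  With \<open>q = t / b\<close> the gain is \<open>K = q \<Phi>(A)\<close> (Ackermann's formula), and \<open>F = A - BK\<close> satisfies
  \<open>qF\<^sup>j = qA\<^sup>j\<close> for \<open>j < n\<close> and \<open>q \<Phi>(F) = 0\<close>. The rows \<open>q, qF, \<dots>, qF\<^sup>n\<^sup>-\<^sup>1\<close> are linearly
  independent, and in this basis \<open>F\<close> is the companion matrix of \<open>\<Phi>\<close>, so \<open>det (sI - F) = \<Phi>(s)\<close>.
\<close>

lemma full_row_rank_left_kernel:
  fixes M :: "'a :: field mat"
  assumes M: "M \<in> carrier_mat r c" and rank: "vec_space.rank r M = r"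
    and z: "z \<in> carrier_vec r" and Mz: "transpose_mat M *\<^sub>v z = 0\<^sub>v c"
  shows "z = 0\<^sub>v r"
proof -
  interpret V: vec_space "TYPE('a)" r .
  have "V.lin_indpt {}"
    by (metis V.fin_dim V.finite_basis_exists V.subset_li_is_li empty_subsetI vec_vs vectorspace.basis_def)
  then obtain S where S: "finite S" "maximal S (\<lambda>T. T \<subseteq> set (cols M) \<and> V.lin_indpt T)"
    using maximal_exists_superset[of "set (cols M)" "\<lambda>T. T \<subseteq> set (cols M) \<and> V.lin_indpt T" "{}"]
    by auto
  have S_cols: "S \<subseteq> set (cols M)" and S_indpt: "V.lin_indpt S"
    using S(2) unfolding maximal_def by auto
  obtain L where L: "set L = S" "distinct L" using S(1) finite_distinct_list by blast
  have len_L: "length L = r"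
    using V.rank_card_indpt[OF M S(2)] rank L distinct_card by fastforce
  have L_carrier: "set L \<subseteq> carrier_vec r" using L S_cols M cols_dim by blast
  define Q where "Q = mat_of_cols r L"
  have Q: "Q \<in> carrier_mat r r" unfolding Q_def using len_L mat_of_cols_carrier(1) by metis
  have "V.rank Q = r"
    using V.lin_indpt_full_rank[OF Q] L S_indpt L_carrier by (simp add: Q_def)
  hence "det (transpose_mat Q) \<noteq> 0" using V.det_rank_iff[OF Q] det_transpose[OF Q] by simp
  moreover have "transpose_mat Q *\<^sub>v z = 0\<^sub>v r"
  proof (rule eq_vecI)
    fix j assume "j < dim_vec (0\<^sub>v r :: 'a vec)"
    hence j: "j < r" by simp
    have "L ! j \<in> set (cols M)" using L S_cols j len_L nth_mem by blast
    then obtain i where i: "i < c" "L ! j = col M i" using M by (auto simp: cols_def in_set_conv_nth)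
    have "col Q j = L ! j"
      unfolding Q_def using len_L j L_carrier by (intro col_mat_of_cols) (auto simp: nth_mem subset_iff)
    hence "(transpose_mat Q *\<^sub>v z) $ j = (transpose_mat M *\<^sub>v z) $ i" using Q M i j by simp
    thus "(transpose_mat Q *\<^sub>v z) $ j = 0\<^sub>v r $ j" using Mz i j by simp
  qed (use Q in auto)
  ultimately show ?thesis using det_0_iff_vec_prod_zero_field[of "transpose_mat Q"] Q z by auto
qed
lemma mult_mat_entry:
  "X \<in> carrier_mat r n \<Longrightarrow> Y \<in> carrier_mat n m \<Longrightarrow> i < r \<Longrightarrow> k < m \<Longrightarrow>
    (X * Y) $$ (i, k) = (\<Sum>l<n. X $$ (i, l) * Y $$ (l, k))"
  by (simp add: scalar_prod_def lessThan_atLeast0)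

lemma det_unit_lower_triangular:
  fixes U :: "'a :: comm_ring_1 mat"
  assumes U: "U \<in> carrier_mat n n"
    and lower: "\<And>i j. i < j \<Longrightarrow> j < n \<Longrightarrow> U $$ (i, j) = 0"
    and diag: "\<And>i. i < n \<Longrightarrow> U $$ (i, i) = 1"
  shows "det U = 1"
proof -
  have "det U = prod_list (diag_mat U)" by (rule det_lower_triangular[OF lower U])
  also have "diag_mat U = replicate n 1"
    using U diag by (intro nth_equalityI) (auto simp: diag_mat_def)
  finally show ?thesis by simp
qed

lemma det_first_column_last_entry:
  fixes N :: "'a :: comm_ring_1 mat"
  assumes N: "N \<in> carrier_mat n n" and n: "0 < n"
    and col0: "\<And>i. i < n - 1 \<Longrightarrow> N $$ (i, 0) = 0"
  shows "det N = N $$ (n - 1, 0) * cofactor N (n - 1) 0"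
proof -
  have "det N = (\<Sum>i<n. N $$ (i, 0) * cofactor N i 0)"
    using laplace_expansion_column[OF N n] .
  also have "\<dots> = (\<Sum>i<n. if i = n - 1 then N $$ (i, 0) * cofactor N i 0 else 0)"
    using col0 by (intro sum.cong) auto
  finally show ?thesis using n by simp
qed

definition companion_mat :: "nat \<Rightarrow> (nat \<Rightarrow> real) \<Rightarrow> real mat" where
  "companion_mat n p =
    mat n n (\<lambda>(i, l). if i < n - 1 then (if l = Suc i then 1 else 0) else - p (n - l))"

lemma companion_mat_carrier: "companion_mat n p \<in> carrier_mat n n"
  unfolding companion_mat_def by simp

lemma char_poly_companion_mat:
  assumes n: "0 < n"
  shows "char_poly (companion_mat n p) = Phi n p"
proof -
  define x :: "real poly" where "x = [:0, 1:]"
  define M where "M = char_poly_matrix (companion_mat n p)"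
  have M: "M \<in> carrier_mat n n" unfolding M_def companion_mat_def by simp
  have M_entry: "M $$ (i, l) = (if i = l then x else 0)
      + (if i < n - 1 then (if l = Suc i then -1 else 0) else [:p (n - l):])"
    if "i < n" "l < n" for i l
    using that unfolding M_def companion_mat_def char_poly_matrix_def x_def by auto
  text \<open>Adding \<open>x\<^sup>l\<close> times column \<open>l\<close> to column 0 turns that column into \<open>(0, \<dots>, 0, \<Phi>)\<close>.\<close>
  define U where "U = mat n n (\<lambda>(i, j). if j = 0 then x ^ i else if i = j then 1 else 0)"
  have U: "U \<in> carrier_mat n n" unfolding U_def by simp
  define N where "N = M * U"
  have N: "N \<in> carrier_mat n n" unfolding N_def using M U by simp
  have "det N = det M"
    unfolding N_def det_mult[OF M U] by (subst det_unit_lower_triangular[OF U]) (auto simp: U_def)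
  have N_col0: "N $$ (i, 0) = (\<Sum>l<n. M $$ (i, l) * x ^ l)" if "i < n" for i
    using mult_mat_entry[OF M U that n] by (simp add: N_def U_def)
  have N_col: "N $$ (i, Suc j) = M $$ (i, Suc j)" if "i < n" "Suc j < n" for i j
  proof -
    have "N $$ (i, Suc j) = (\<Sum>l<n. M $$ (i, l) * U $$ (l, Suc j))"
      unfolding N_def using mult_mat_entry[OF M U that] .
    also have "\<dots> = (\<Sum>l<n. if l = Suc j then M $$ (i, l) else 0)"
      using that by (intro sum.cong) (auto simp: U_def)
    finally show ?thesis using that by simp
  qed
  have "N $$ (i, 0) = 0" if "i < n - 1" for i
  proof -
    have "N $$ (i, 0) = (\<Sum>l<n. M $$ (i, l) * x ^ l)" using that by (intro N_col0) simp
    also have "\<dots> = (\<Sum>l<n. (if l = i then x * x ^ l else 0) + (if l = Suc i then - (x ^ l) else 0))"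
      using that by (intro sum.cong) (auto simp: M_entry)
    finally show ?thesis using that by (simp add: sum.distrib)
  qed
  hence "det N = N $$ (n - 1, 0) * cofactor N (n - 1) 0"
    by (rule det_first_column_last_entry[OF N n])
  also have "N $$ (n - 1, 0) = Phi n p"
  proof -
    have "N $$ (n - 1, 0) = (\<Sum>l<n. M $$ (n - 1, l) * x ^ l)" using n by (intro N_col0) simp
    also have "\<dots> = (\<Sum>l<n. (if l = n - 1 then x * x ^ l else 0) + [:p (n - l):] * x ^ l)"
      using n by (intro sum.cong) (auto simp: M_entry algebra_simps)
    also have "\<dots> = x ^ n + (\<Sum>l<n. [:p (n - l):] * x ^ l)"
      using n by (simp add: sum.distrib power_Suc[symmetric] del: power_Suc)
    also have "(\<Sum>l<n. [:p (n - l):] * x ^ l) = (\<Sum>i = 1..n. monom (p i) (n - i))"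
      by (rule sum.reindex_bij_witness[of _ "\<lambda>i. n - i" "\<lambda>l. n - l"]) (auto simp: monom_altdef x_def)
    finally show ?thesis unfolding Phi_def x_def by (simp add: monom_altdef)
  qed
  also have "cofactor N (n - 1) 0 = 1"
  proof -
    define D where "D = mat_delete N (n - 1) 0"
    have D: "D \<in> carrier_mat (n - 1) (n - 1)" unfolding D_def using mat_delete_carrier[OF N] .
    have D_entry: "D $$ (i, j) = M $$ (i, Suc j)" if "i < n - 1" "j < n - 1" for i j
      unfolding D_def mat_delete_def using that N by (auto simp: N_col)
    have "det D = prod_list (diag_mat D)"
      by (rule det_lower_triangular[OF _ D]) (auto simp: D_entry M_entry)
    also have "diag_mat D = replicate (n - 1) (-1)"
      using D by (intro nth_equalityI) (auto simp: diag_mat_def D_entry M_entry)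
    finally show ?thesis unfolding cofactor_def D_def by (simp flip: power_add)
  qed
  finally show ?thesis using \<open>det N = det M\<close> unfolding char_poly_def M_def by simp
qed

lemma pow_mat_add:
  assumes A: "A \<in> carrier_mat n n"
  shows "A ^\<^sub>m (i + j) = A ^\<^sub>m i * A ^\<^sub>m j"
proof (induction j)
  case (Suc j)
  have "A ^\<^sub>m (i + Suc j) = A ^\<^sub>m i * A ^\<^sub>m j * A" using Suc by simp
  also have "\<dots> = A ^\<^sub>m i * A ^\<^sub>m Suc j"
    using assoc_mult_mat[OF pow_carrier_mat pow_carrier_mat A, OF A A] by simp
  finally show ?case .
qed (use A in simp)

fun lincomb_pows :: "(nat \<Rightarrow> 'a :: comm_semiring_1) \<Rightarrow> 'a mat \<Rightarrow> nat \<Rightarrow> 'a mat" where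
  "lincomb_pows c A 0 = c 0 \<cdot>\<^sub>m 1\<^sub>m (dim_row A)"
| "lincomb_pows c A (Suc i) = lincomb_pows c A i + c (Suc i) \<cdot>\<^sub>m A ^\<^sub>m Suc i"

lemma lincomb_pows_carrier: "A \<in> carrier_mat n n \<Longrightarrow> lincomb_pows c A i \<in> carrier_mat n n"
  by (induction i) auto

lemma mult_lincomb_pows_entry:
  assumes X: "X \<in> carrier_mat r n" and A: "A \<in> carrier_mat n n" and j: "j < r" and k: "k < n"
  shows "(X * lincomb_pows c A i) $$ (j, k) = (\<Sum>l\<le>i. c l * (X * A ^\<^sub>m l) $$ (j, k))"
proof (induction i)
  case 0
  show ?case using X A j k by (simp add: mult_smult_distrib[OF X])
next
  case (Suc i)
  have "X * lincomb_pows c A (Suc i) = X * lincomb_pows c A i + X * (c (Suc i) \<cdot>\<^sub>m A ^\<^sub>m Suc i)"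
    unfolding lincomb_pows.simps(2)
    by (rule mult_add_distrib_mat[OF X lincomb_pows_carrier[OF A] smult_carrier_mat[OF pow_carrier_mat[OF A]]])
  also have "X * (c (Suc i) \<cdot>\<^sub>m A ^\<^sub>m Suc i) = c (Suc i) \<cdot>\<^sub>m (X * A ^\<^sub>m Suc i)"
    using mult_smult_distrib[OF X pow_carrier_mat[OF A]] .
  finally have "X * lincomb_pows c A (Suc i) = X * lincomb_pows c A i + c (Suc i) \<cdot>\<^sub>m (X * A ^\<^sub>m Suc i)" .
  thus ?case using Suc X A j k lincomb_pows_carrier[OF A, of c i] by simp
qed

definition Phi_mat :: "nat \<Rightarrow> (nat \<Rightarrow> real) \<Rightarrow> real mat \<Rightarrow> real mat" where
  "Phi_mat n p A = A ^\<^sub>m n + lincomb_pows (\<lambda>l. p (n - l)) A (n - 1)"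

lemma Phi_mat_carrier: "A \<in> carrier_mat n n \<Longrightarrow> Phi_mat n p A \<in> carrier_mat n n"
  unfolding Phi_mat_def using lincomb_pows_carrier[of A n] by simp

lemma mult_Phi_mat_entry:
  assumes n: "0 < n" and q: "q \<in> carrier_mat 1 n" and A: "A \<in> carrier_mat n n" and k: "k < n"
  shows "(q * Phi_mat n p A) $$ (0, k) = (q * A ^\<^sub>m n) $$ (0, k) + (\<Sum>l<n. p (n - l) * (q * A ^\<^sub>m l) $$ (0, k))"
proof -
  let ?L = "q * lincomb_pows (\<lambda>l. p (n - l)) A (n - 1)"
  have L: "?L \<in> carrier_mat 1 n" using mult_carrier_mat[OF q lincomb_pows_carrier[OF A]] .
  have "q * Phi_mat n p A = q * A ^\<^sub>m n + ?L"
    unfolding Phi_mat_def using mult_add_distrib_mat[OF q pow_carrier_mat lincomb_pows_carrier, OF A A] .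
  hence "(q * Phi_mat n p A) $$ (0, k) = (q * A ^\<^sub>m n) $$ (0, k) + ?L $$ (0, k)"
    using carrier_matD[OF L] k by (simp del: index_mult_mat(1))
  moreover have "{..n - 1} = {..<n}" using n by auto
  ultimately show ?thesis using mult_lincomb_pows_entry[OF q A _ k, of 0 "\<lambda>l. p (n - l)" "n - 1"] by simp
qed

definition observability_mat :: "nat \<Rightarrow> 'a :: semiring_1 mat \<Rightarrow> 'a mat \<Rightarrow> 'a mat" where
  "observability_mat n A q = mat n n (\<lambda>(i, k). (q * A ^\<^sub>m i) $$ (0, k))"

lemma observability_mat_carrier: "observability_mat n A q \<in> carrier_mat n n"
  unfolding observability_mat_def by simp

lemma observability_mat_mult_entry:
  assumes "q \<in> carrier_mat 1 n" "A \<in> carrier_mat n n" "X \<in> carrier_mat n m" "i < n" "j < m"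
  shows "(observability_mat n A q * X) $$ (i, j) = (q * A ^\<^sub>m i * X) $$ (0, j)"
  using assms by (simp add: observability_mat_def scalar_prod_def)

lemma observability_mat_companion:
  assumes F: "F \<in> carrier_mat n n" and q: "q \<in> carrier_mat 1 n"
    and Phi_F: "\<And>k. k < n \<Longrightarrow> (q * F ^\<^sub>m n) $$ (0, k) = - (\<Sum>l<n. p (n - l) * (q * F ^\<^sub>m l) $$ (0, k))"
  shows "observability_mat n F q * F = companion_mat n p * observability_mat n F q"
    (is "?O * F = ?C * ?O")
proof (rule eq_matI)
  fix i k assume "i < dim_row (?C * ?O)" "k < dim_col (?C * ?O)"
  hence i: "i < n" and k: "k < n" by (auto simp: companion_mat_def observability_mat_def)
  have "(?O * F) $$ (i, k) = (q * F ^\<^sub>m i * F) $$ (0, k)"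
    by (rule observability_mat_mult_entry[OF q F F i k])
  hence lhs: "(?O * F) $$ (i, k) = (q * F ^\<^sub>m Suc i) $$ (0, k)"
    using assoc_mult_mat[OF q pow_carrier_mat F, OF F] by simp
  have rhs: "(?C * ?O) $$ (i, k) = (\<Sum>l<n. ?C $$ (i, l) * ?O $$ (l, k))"
    by (rule mult_mat_entry[OF companion_mat_carrier observability_mat_carrier i k])
  show "(?O * F) $$ (i, k) = (?C * ?O) $$ (i, k)"
  proof (cases "i < n - 1")
    case True
    have "(\<Sum>l<n. ?C $$ (i, l) * ?O $$ (l, k)) = (\<Sum>l<n. if l = Suc i then ?O $$ (l, k) else 0)"
      using True by (intro sum.cong) (auto simp: companion_mat_def)
    thus ?thesis using lhs rhs True k by (simp add: observability_mat_def)
  next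
    case False
    hence "Suc i = n" using i by simp
    hence "(?O * F) $$ (i, k) = - (\<Sum>l<n. p (n - l) * (q * F ^\<^sub>m l) $$ (0, k))"
      using lhs Phi_F[OF k] by simp
    also have "\<dots> = (\<Sum>l<n. ?C $$ (i, l) * ?O $$ (l, k))"
      unfolding sum_negf[symmetric]
      using False i k by (intro sum.cong) (auto simp: companion_mat_def observability_mat_def)
    finally show ?thesis using rhs by simp
  qed
qed (use F in \<open>auto simp: companion_mat_def observability_mat_def\<close>)

text \<open>The rows \<open>q, qF, \<dots>, qF\<^sup>n\<^sup>-\<^sup>1\<close> form a basis in which \<open>F\<close> acts as the companion matrix.\<close>
lemma char_poly_cyclic_row:
  assumes n: "0 < n" and F: "F \<in> carrier_mat n n" and q: "q \<in> carrier_mat 1 n"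
    and det_O: "det (observability_mat n F q) \<noteq> 0"
    and Phi_F: "\<And>k. k < n \<Longrightarrow> (q * F ^\<^sub>m n) $$ (0, k) = - (\<Sum>l<n. p (n - l) * (q * F ^\<^sub>m l) $$ (0, k))"
  shows "char_poly F = Phi n p"
proof -
  let ?O = "observability_mat n F q" and ?C = "companion_mat n p"
  obtain O' where O': "O' \<in> carrier_mat n n" "O' * ?O = 1\<^sub>m n" "?O * O' = 1\<^sub>m n"
    using det_non_zero_imp_unit[OF observability_mat_carrier det_O, of "()"]
    by (auto simp: Units_def ring_mat_def)
  have "F = O' * ?O * F" using O' F by simp
  also have "\<dots> = O' * (?C * ?O)"
    using assoc_mult_mat[OF O'(1) observability_mat_carrier F] observability_mat_companion[OF F q Phi_F]
    by simp
  also have "\<dots> = O' * ?C * ?O"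
    using assoc_mult_mat[OF O'(1) companion_mat_carrier observability_mat_carrier] by simp
  finally have "similar_mat F ?C"
    using O' F companion_mat_carrier observability_mat_carrier by (intro similar_matI[where n = n]) auto
  hence "char_poly F = char_poly ?C" by (rule char_poly_similar)
  thus ?thesis using char_poly_companion_mat[OF n] by simp
qed

lemma minus_zero_mat: "X \<in> carrier_mat r c \<Longrightarrow> X - 0\<^sub>m r c = (X :: 'a :: group_add mat)"
  by (intro eq_matI) auto

lemma mult_feedback:
  fixes X :: "'a :: comm_ring_1 mat"
  assumes X: "X \<in> carrier_mat r n" and A: "A \<in> carrier_mat n n"
    and B: "B \<in> carrier_mat n 1" and K: "K \<in> carrier_mat 1 n"
  shows "X * (A - B * K) = X * A - X * B * K"
  using mult_minus_distrib_mat[OF X A mult_carrier_mat[OF B K]] assoc_mult_mat[OF X B K] by simp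

lemma feedback_pow_row:
  fixes q :: "'a :: comm_ring_1 mat"
  assumes A: "A \<in> carrier_mat n n" and B: "B \<in> carrier_mat n 1" and K: "K \<in> carrier_mat 1 n"
    and q: "q \<in> carrier_mat r n"
    and null: "\<And>j. j < m \<Longrightarrow> q * A ^\<^sub>m j * B = 0\<^sub>m r 1"
  shows "j \<le> m \<Longrightarrow> q * (A - B * K) ^\<^sub>m j = q * A ^\<^sub>m j"
proof (induction j)
  case (Suc j)
  have F: "A - B * K \<in> carrier_mat n n" using A B K by (intro minus_carrier_mat mult_carrier_mat)
  have qA: "q * A ^\<^sub>m j \<in> carrier_mat r n" using q A by simp
  have "q * (A - B * K) ^\<^sub>m Suc j = q * (A - B * K) ^\<^sub>m j * (A - B * K)"
    using assoc_mult_mat[OF q pow_carrier_mat F, OF F] by simp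
  also have "\<dots> = q * A ^\<^sub>m j * A - q * A ^\<^sub>m j * B * K"
    using Suc mult_feedback[OF qA A B K] by simp
  also have "q * A ^\<^sub>m j * B * K = 0\<^sub>m r n" using null[of j] Suc.prems K by simp
  also have "q * A ^\<^sub>m j * A = q * A ^\<^sub>m Suc j"
    using assoc_mult_mat[OF q pow_carrier_mat A, OF A] by simp
  finally show ?case by (simp only: minus_zero_mat[OF mult_carrier_mat[OF q pow_carrier_mat[OF A]]])
qed (use q A B K in simp)

text \<open>\<open>R = [A\<^sup>n\<^sup>-\<^sup>1B, \<dots>, AB, B]\<close> makes the product unit lower triangular.\<close>
lemma det_observability_mat_nonzero:
  fixes q :: "'a :: field mat"
  assumes A: "A \<in> carrier_mat n n" and B: "B \<in> carrier_mat n 1" and q: "q \<in> carrier_mat 1 n"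
    and null: "\<And>j. j < n - 1 \<Longrightarrow> q * A ^\<^sub>m j * B = 0\<^sub>m 1 1"
    and one: "q * A ^\<^sub>m (n - 1) * B = 1\<^sub>m 1"
  shows "det (observability_mat n A q) \<noteq> 0"
proof -
  let ?O = "observability_mat n A q"
  define R where "R = mat n n (\<lambda>(l, j). (A ^\<^sub>m (n - 1 - j) * B) $$ (l, 0))"
  have R: "R \<in> carrier_mat n n" unfolding R_def by simp
  have OR_entry: "(?O * R) $$ (i, j) = (q * A ^\<^sub>m (i + (n - 1 - j)) * B) $$ (0, 0)"
    if "i < n" "j < n" for i j
  proof -
    have AjB: "A ^\<^sub>m (n - 1 - j) * B \<in> carrier_mat n 1" using mult_carrier_mat[OF pow_carrier_mat[OF A] B] .
    have qA: "q * A ^\<^sub>m i \<in> carrier_mat 1 n" using mult_carrier_mat[OF q pow_carrier_mat[OF A]] .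
    have "(?O * R) $$ (i, j) = (q * A ^\<^sub>m i * R) $$ (0, j)"
      by (rule observability_mat_mult_entry[OF q A R that])
    also have "\<dots> = (\<Sum>l<n. (q * A ^\<^sub>m i) $$ (0, l) * R $$ (l, j))"
      by (rule mult_mat_entry[OF qA R]) (use that in auto)
    also have "\<dots> = (\<Sum>l<n. (q * A ^\<^sub>m i) $$ (0, l) * (A ^\<^sub>m (n - 1 - j) * B) $$ (l, 0))"
      using that by (intro sum.cong) (auto simp: R_def)
    also have "\<dots> = (q * A ^\<^sub>m i * (A ^\<^sub>m (n - 1 - j) * B)) $$ (0, 0)"
      by (rule mult_mat_entry[symmetric, OF qA AjB]) auto
    also have "q * A ^\<^sub>m i * (A ^\<^sub>m (n - 1 - j) * B) = q * A ^\<^sub>m (i + (n - 1 - j)) * B"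
      using assoc_mult_mat[OF qA pow_carrier_mat B, OF A] assoc_mult_mat[OF q pow_carrier_mat pow_carrier_mat, OF A A]
        pow_mat_add[OF A] by simp
    finally show ?thesis .
  qed
  have "det (?O * R) = 1"
  proof (rule det_unit_lower_triangular)
    show "(?O * R) $$ (i, j) = 0" if "i < j" "j < n" for i j
      using OR_entry[of i j] null[of "i + (n - 1 - j)"] that by simp
    show "(?O * R) $$ (i, i) = 1" if "i < n" for i
      using OR_entry[OF that that] one that by simp
  qed (use mult_carrier_mat[OF observability_mat_carrier R] in this)
  thus ?thesis using det_mult[OF observability_mat_carrier R] by auto
qed

theorem char_poly_ackermann:
  assumes n: "0 < n" and A: "A \<in> carrier_mat n n" and B: "B \<in> carrier_mat n 1"
    and q: "q \<in> carrier_mat 1 n"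
    and null: "\<And>j. j < n - 1 \<Longrightarrow> q * A ^\<^sub>m j * B = 0\<^sub>m 1 1"
    and one: "q * A ^\<^sub>m (n - 1) * B = 1\<^sub>m 1"
  shows "char_poly (A - B * (q * Phi_mat n p A)) = Phi n p"
proof -
  define K where "K = q * Phi_mat n p A"
  define F where "F = A - B * K"
  have K: "K \<in> carrier_mat 1 n" unfolding K_def using q Phi_mat_carrier[OF A] by simp
  have F: "F \<in> carrier_mat n n" unfolding F_def using A B K by (intro minus_carrier_mat mult_carrier_mat)
  have qF: "q * F ^\<^sub>m j = q * A ^\<^sub>m j" if "j \<le> n - 1" for j
    unfolding F_def using feedback_pow_row[OF A B K q null that] .
  have "q * F ^\<^sub>m n = q * F ^\<^sub>m (n - 1) * F"
    using n assoc_mult_mat[OF q pow_carrier_mat F, OF F] by (cases n) simp_all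
  also have "\<dots> = q * A ^\<^sub>m (n - 1) * A - K"
    using qF[of "n - 1"] mult_feedback[of "q * A ^\<^sub>m (n - 1)" 1 n, OF _ A B K] q A one K
    by (simp add: F_def)
  also have "q * A ^\<^sub>m (n - 1) * A = q * A ^\<^sub>m n"
    using n assoc_mult_mat[OF q pow_carrier_mat A, OF A] by (cases n) simp_all
  finally have qFn: "q * F ^\<^sub>m n = q * A ^\<^sub>m n - K" .
  have Phi_F: "(q * F ^\<^sub>m n) $$ (0, k) = - (\<Sum>l<n. p (n - l) * (q * F ^\<^sub>m l) $$ (0, k))"
    if k: "k < n" for k
  proof -
    have "(q * F ^\<^sub>m n) $$ (0, k) = (q * A ^\<^sub>m n) $$ (0, k) - K $$ (0, k)"
      using qFn carrier_matD[OF K] k by (simp del: index_mult_mat(1))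
    thus ?thesis using qF mult_Phi_mat_entry[OF n q A k] by (simp add: K_def)
  qed
  have "observability_mat n F q = observability_mat n A q"
    unfolding observability_mat_def using qF by (intro eq_matI) auto
  hence "det (observability_mat n F q) \<noteq> 0"
    using det_observability_mat_nonzero[OF A B q null one] by simp
  from char_poly_cyclic_row[OF n F q this Phi_F]
  show ?thesis unfolding F_def K_def .
qed

lemma controllable_row_annihilator:
  assumes ctrb: "controllable n A B" and A: "A \<in> carrier_mat n n" and B: "B \<in> carrier_mat n 1"
    and t: "t \<in> carrier_mat 1 n" and null: "\<And>j. j < n \<Longrightarrow> t * A ^\<^sub>m j * B = 0\<^sub>m 1 1"
  shows "t = 0\<^sub>m 1 n"
proof -
  let ?C = "ctrb_mat n A B"
  have C: "?C \<in> carrier_mat n n" unfolding ctrb_mat_def by simp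
  have rank: "vec_space.rank n ?C = n"
    using ctrb unfolding controllable_def mrank_def ctrb_mat_def by simp
  have w: "row t 0 \<in> carrier_vec n" by (rule row_carrier_vec[OF _ t]) simp
  have "transpose_mat ?C *\<^sub>v row t 0 = 0\<^sub>v n"
  proof (rule eq_vecI)
    fix j assume "j < dim_vec (0\<^sub>v n :: real vec)"
    hence j: "j < n" by simp
    have AjB: "A ^\<^sub>m j * B \<in> carrier_mat n 1" using mult_carrier_mat[OF pow_carrier_mat[OF A] B] .
    have "(transpose_mat ?C *\<^sub>v row t 0) $ j = (\<Sum>l<n. t $$ (0, l) * (A ^\<^sub>m j * B) $$ (l, 0))"
      using j t A B by (simp add: ctrb_mat_def scalar_prod_def lessThan_atLeast0 mult.commute)
    also have "\<dots> = (t * (A ^\<^sub>m j * B)) $$ (0, 0)"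
      by (rule mult_mat_entry[symmetric, OF t AjB]) auto
    also have "t * (A ^\<^sub>m j * B) = 0\<^sub>m 1 1"
      using null[OF j] assoc_mult_mat[OF t pow_carrier_mat B, OF A] by simp
    finally show "(transpose_mat ?C *\<^sub>v row t 0) $ j = 0\<^sub>v n $ j" using j by simp
  qed (use C in simp)
  hence row0: "row t 0 = 0\<^sub>v n" by (rule full_row_rank_left_kernel[OF C rank w])
  show ?thesis
  proof (rule eq_matI)
    fix i j assume "i < dim_row (0\<^sub>m 1 n :: real mat)" "j < dim_col (0\<^sub>m 1 n :: real mat)"
    hence "i = 0" "j < n" by auto
    thus "t $$ (i, j) = 0\<^sub>m 1 n $$ (i, j)" using arg_cong[OF row0, of "\<lambda>v. v $ j"] t by simp
  qed (use t in auto)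
qed

locale annihilator_chain =
  fixes n :: nat and A B :: "real mat" and an :: "nat \<Rightarrow> real mat"
  assumes A: "A \<in> carrier_mat n n" and B: "B \<in> carrier_mat n 1"
    and an_carrier: "\<And>k. 1 \<le> k \<Longrightarrow> k \<le> n - 1 \<Longrightarrow> an k \<in> carrier_mat (n - k) (n - k + 1)"
    and an_rank: "\<And>k. 1 \<le> k \<Longrightarrow> k \<le> n - 1 \<Longrightarrow> mrank (an k) = n - k"
    and an_annihilates: "\<And>k. 1 \<le> k \<Longrightarrow> k \<le> n - 1 \<Longrightarrow> an k * Bk n A B an (k - 1) = 0\<^sub>m (n - k) 1"
begin

lemma an_Suc_carrier: "Suc k \<le> n - 1 \<Longrightarrow> an (Suc k) \<in> carrier_mat (n - Suc k) (n - k)"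
  using an_carrier[of "Suc k"] by (simp add: Suc_diff_Suc)

lemma an_prod_carrier: "k \<le> n - 1 \<Longrightarrow> an_prod n an k \<in> carrier_mat (n - k) n"
proof (induction k)
  case (Suc k)
  thus ?case using mult_carrier_mat[OF an_Suc_carrier[OF Suc.prems]] by simp
qed simp

lemma an_prod_pow_annihilates:
  "k \<le> n - 1 \<Longrightarrow> j < k \<Longrightarrow> an_prod n an k * A ^\<^sub>m j * B = 0\<^sub>m (n - k) 1"
proof (induction k arbitrary: j)
  case (Suc k)
  have a: "an (Suc k) \<in> carrier_mat (n - Suc k) (n - k)" using an_Suc_carrier[OF Suc.prems(1)] .
  have T: "an_prod n an k \<in> carrier_mat (n - k) n" using an_prod_carrier Suc.prems by simp
  have "an_prod n an (Suc k) * A ^\<^sub>m j * B = an (Suc k) * (an_prod n an k * A ^\<^sub>m j * B)"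
    using assoc_mult_mat[OF a T pow_carrier_mat, OF A]
      assoc_mult_mat[OF a mult_carrier_mat[OF T pow_carrier_mat] B, OF A] by simp
  moreover have "an_prod n an k * A ^\<^sub>m j * B = (if j < k then 0\<^sub>m (n - k) 1 else Bk n A B an k)"
    using Suc by (auto simp: Bk_def less_Suc_eq)
  moreover have "an (Suc k) * Bk n A B an k = 0\<^sub>m (n - Suc k) 1"
    using an_annihilates[of "Suc k"] Suc.prems by simp
  ultimately show ?case using a by auto
qed simp

lemma an_prod_left_kernel:
  "k \<le> n - 1 \<Longrightarrow> z \<in> carrier_vec (n - k) \<Longrightarrow> transpose_mat (an_prod n an k) *\<^sub>v z = 0\<^sub>v n
    \<Longrightarrow> z = 0\<^sub>v (n - k)"
proof (induction k arbitrary: z)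
  case (Suc k)
  have a: "an (Suc k) \<in> carrier_mat (n - Suc k) (n - k)" using an_Suc_carrier[OF Suc.prems(1)] .
  have T: "an_prod n an k \<in> carrier_mat (n - k) n" using an_prod_carrier Suc.prems by simp
  have "transpose_mat (an_prod n an (Suc k)) = transpose_mat (an_prod n an k) * transpose_mat (an (Suc k))"
    using transpose_mult[OF a T] by simp
  hence "transpose_mat (an_prod n an k) *\<^sub>v (transpose_mat (an (Suc k)) *\<^sub>v z) = 0\<^sub>v n"
    using Suc.prems a T by (metis assoc_mult_mat_vec transpose_carrier_mat)
  hence "transpose_mat (an (Suc k)) *\<^sub>v z = 0\<^sub>v (n - k)"
    using Suc.IH Suc.prems a by auto
  moreover have "vec_space.rank (n - Suc k) (an (Suc k)) = n - Suc k"
    using an_rank[of "Suc k"] Suc.prems a unfolding mrank_def by auto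
  ultimately show ?case using full_row_rank_left_kernel[OF a] Suc.prems by blast
qed simp

lemma At_last_mult_nonzero:
  assumes n: "0 < n" and ctrb: "controllable n A B"
  shows "(At n A an (n - 1) * B) $$ (0, 0) \<noteq> 0"
proof
  let ?t = "an_prod n an (n - 1)"
  assume last: "(At n A an (n - 1) * B) $$ (0, 0) = 0"
  have t: "?t \<in> carrier_mat 1 n" using an_prod_carrier[of "n - 1"] n by simp
  have "?t * A ^\<^sub>m j * B = 0\<^sub>m 1 1" if "j < n" for j
  proof (cases "j < n - 1")
    case True
    thus ?thesis using an_prod_pow_annihilates[of "n - 1" j] n by simp
  next
    case False
    hence "j = n - 1" using that by simp
    hence "?t * A ^\<^sub>m j * B = At n A an (n - 1) * B" by (simp add: At_def)
    also have "\<dots> = 0\<^sub>m 1 1"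
    proof (rule eq_matI)
      fix i k assume "i < dim_row (0\<^sub>m 1 1 :: real mat)" "k < dim_col (0\<^sub>m 1 1 :: real mat)"
      thus "(At n A an (n - 1) * B) $$ (i, k) = 0\<^sub>m 1 1 $$ (i, k)" using last by simp
    qed (use t B in \<open>simp_all add: At_def\<close>)
    finally show ?thesis .
  qed
  hence zero: "?t = 0\<^sub>m 1 n" using controllable_row_annihilator[OF ctrb A B t] by blast
  have "transpose_mat ?t *\<^sub>v vec 1 (\<lambda>_. 1) = 0\<^sub>v n"
    unfolding zero by (rule eq_vecI) (simp_all add: scalar_prod_def)
  hence "vec 1 (\<lambda>_. 1) = (0\<^sub>v 1 :: real vec)" using an_prod_left_kernel[of "n - 1"] n by simp
  hence "vec 1 (\<lambda>_. 1) $ 0 = (0\<^sub>v 1 :: real vec) $ 0" by (rule arg_cong)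
  thus False by simp
qed

lemma Kseq_eq_an_prod:
  "i \<le> n - 1 \<Longrightarrow> Kseq n A an p i = an_prod n an i * lincomb_pows (\<lambda>l. p (n - l)) A i"
proof (induction i)
  case (Suc i)
  let ?S = "lincomb_pows (\<lambda>l. p (n - l)) A"
  have a: "an (Suc i) \<in> carrier_mat (n - Suc i) (n - i)" using an_Suc_carrier[OF Suc.prems] .
  have T: "an_prod n an i \<in> carrier_mat (n - i) n" using an_prod_carrier Suc.prems by simp
  have T': "an_prod n an (Suc i) \<in> carrier_mat (n - Suc i) n" by (rule an_prod_carrier[OF Suc.prems])
  have "Kseq n A an p (Suc i)
      = an (Suc i) * (an_prod n an i * ?S i) + p (n - Suc i) \<cdot>\<^sub>m (an_prod n an (Suc i) * A ^\<^sub>m Suc i)"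
    using Suc by (simp add: At_def)
  also have "\<dots> = an_prod n an (Suc i) * ?S i + an_prod n an (Suc i) * (p (n - Suc i) \<cdot>\<^sub>m A ^\<^sub>m Suc i)"
    using assoc_mult_mat[OF a T lincomb_pows_carrier[OF A]] mult_smult_distrib[OF T' pow_carrier_mat[OF A]]
    by (simp del: pow_mat.simps(2))
  also have "\<dots> = an_prod n an (Suc i) * ?S (Suc i)"
    unfolding lincomb_pows.simps(2)
    by (rule mult_add_distrib_mat[symmetric, OF T' lincomb_pows_carrier[OF A] smult_carrier_mat[OF pow_carrier_mat[OF A]]])
  finally show ?case .
qed (use A in simp)

lemma Kn_eq_an_prod:
  assumes n: "0 < n"
  shows "Kn n A an p = an_prod n an (n - 1) * Phi_mat n p A"
proof -
  let ?t = "an_prod n an (n - 1)" and ?S = "lincomb_pows (\<lambda>l. p (n - l)) A (n - 1)"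
  have t: "?t \<in> carrier_mat 1 n" using an_prod_carrier[of "n - 1"] n by simp
  have "At n A an (n - 1) * A = ?t * A ^\<^sub>m n"
    using assoc_mult_mat[OF t pow_carrier_mat A, OF A] n by (cases n) (simp_all add: At_def)
  hence "Kn n A an p = ?t * ?S + ?t * A ^\<^sub>m n"
    unfolding Kn_def using Kseq_eq_an_prod[of "n - 1"] by simp
  also have "\<dots> = ?t * Phi_mat n p A"
    unfolding Phi_mat_def
    using mult_add_distrib_mat[OF t pow_carrier_mat lincomb_pows_carrier, OF A A]
      comm_add_mat[OF mult_carrier_mat[OF t lincomb_pows_carrier] mult_carrier_mat[OF t pow_carrier_mat], OF A A]
    by simp
  finally show ?thesis .
qed

end

theorem mainTheorem14:
  fixes n :: nat and A B :: "real mat" and an :: "nat \<Rightarrow> real mat" and p :: "nat \<Rightarrow> real"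
  assumes "n \<ge> 2"
    and "A \<in> carrier_mat n n" and "B \<in> carrier_mat n 1"
    and "controllable n A B"
    and "\<And>k. 1 \<le> k \<Longrightarrow> k \<le> n - 1 \<Longrightarrow> an k \<in> carrier_mat (n - k) (n - k + 1)"
    and "\<And>k. 1 \<le> k \<Longrightarrow> k \<le> n - 1 \<Longrightarrow> mrank (an k) = n - k"
    and "\<And>k. 1 \<le> k \<Longrightarrow> k \<le> n - 1 \<Longrightarrow> an k * Bk n A B an (k - 1) = 0\<^sub>m (n - k) 1"
  shows "Bk n A B an (n - 1) = At n A an (n - 1) * B
         \<and> (At n A an (n - 1) * B) $$ (0, 0) \<noteq> 0
         \<and> char_poly (A - B * ((1 / (At n A an (n - 1) * B) $$ (0, 0)) \<cdot>\<^sub>m Kn n A an p)) = Phi n p"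
proof -
  interpret annihilator_chain n A B an using assms(2,3,5-7) by unfold_locales
  have n: "0 < n" using assms(1) by simp
  define b where "b = (At n A an (n - 1) * B) $$ (0, 0)"
  define q where "q = (1 / b) \<cdot>\<^sub>m an_prod n an (n - 1)"
  have b: "b \<noteq> 0" unfolding b_def using At_last_mult_nonzero[OF n assms(4)] .
  have t: "an_prod n an (n - 1) \<in> carrier_mat 1 n" using an_prod_carrier[of "n - 1"] n by simp
  have q: "q \<in> carrier_mat 1 n" unfolding q_def using t by simp
  have q_pow: "q * A ^\<^sub>m j * B = (1 / b) \<cdot>\<^sub>m (an_prod n an (n - 1) * A ^\<^sub>m j * B)" for j
    unfolding q_def
    using mult_smult_assoc_mat[OF t pow_carrier_mat, OF A]
      mult_smult_assoc_mat[OF mult_carrier_mat[OF t pow_carrier_mat] B, OF A] by simp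
  have null: "q * A ^\<^sub>m j * B = 0\<^sub>m 1 1" if "j < n - 1" for j
    unfolding q_pow using an_prod_pow_annihilates[of "n - 1" j] n that by simp
  have one: "q * A ^\<^sub>m (n - 1) * B = 1\<^sub>m 1"
    unfolding q_pow using b t B by (intro eq_matI) (auto simp: b_def At_def simp del: index_mult_mat(1))
  have "(1 / b) \<cdot>\<^sub>m Kn n A an p = q * Phi_mat n p A"
    unfolding Kn_eq_an_prod[OF n] q_def using mult_smult_assoc_mat[OF t Phi_mat_carrier, OF A] by simp
  thus ?thesis
    using b char_poly_ackermann[OF n assms(2,3) q null one] by (simp add: b_def Bk_def At_def)
qed

end
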